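(* Suppose that $\phi\in\mathbb{Q}(x)$ has degree $2$, has a $2$-periodic critical point, and that $\operatorname{Aut}(\phi)$ is nontrivial. Then $\phi$ is linearly conjugate over $\mathbb{Q}$ to a map of the form $\psi_v=\dfrac{2x-1}{vx^2-1}$ with $v\in\mathbb{Q}\setminus\{0,4\}$.
   Context: A point $P\in\mathbb{P}^1(\overline{\mathbb{Q}})$ is $2$-periodic if $\phi^2(P)=P\neq\phi(P)$; a critical point is a point where $\phi:\mathbb{P}^1\to\mathbb{P}^1$ ramifies. $\operatorname{Aut}(\phi)$ is the group of degree-one $\sigma\in\overline{\mathbb{Q}}(x)$ with $\sigma^{-1}\circ\phi\circ\sigma=\phi$. Linear conjugacy over $\mathbb{Q}$: $\psi=\sigma^{-1}\circ\phi\circ\sigma$ for some degree-one $\sigma\in\mathbb{Q}(x)$. *)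

theory Defs
  imports "HOL-Computational_Algebra.Computational_Algebra"
begin

text \<open>A rational map over Q is represented by a pair (p, q) of rational polynomials,
  phi = p / q.
  Q-bar is realised as the algebraic complex numbers; points of P^1(Q-bar) are
  nonzero pairs (a, b) of algebraic complex numbers up to scaling.\<close>

definition rat_map_degree :: "rat poly \<times> rat poly \<Rightarrow> nat \<Rightarrow> bool" where
  "rat_map_degree f d \<longleftrightarrow> coprime (fst f) (snd f) \<and> max (degree (fst f)) (degree (snd f)) = d"

definition hom :: "nat \<Rightarrow> rat poly \<Rightarrow> complex \<times> complex \<Rightarrow> complex" where
  "hom d p z = (\<Sum>i\<le>d. of_rat (coeff p i) * fst z ^ i * snd z ^ (d - i))"

text \<open>Same, with polynomial arguments (for restricting to a line through a point).\<close>
definition hom_poly :: "nat \<Rightarrow> rat poly \<Rightarrow> complex poly \<Rightarrow> complex poly \<Rightarrow> complex poly" where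
  "hom_poly d p u v = (\<Sum>i\<le>d. [:of_rat (coeff p i):] * u ^ i * v ^ (d - i))"

definition map_P1 :: "nat \<Rightarrow> rat poly \<times> rat poly \<Rightarrow> complex \<times> complex \<Rightarrow> complex \<times> complex" where
  "map_P1 d f z = (hom d (fst f) z, hom d (snd f) z)"

definition is_P1_point :: "complex \<times> complex \<Rightarrow> bool" where
  "is_P1_point z \<longleftrightarrow> z \<noteq> (0, 0) \<and> algebraic (fst z) \<and> algebraic (snd z)"

definition proj_eq :: "complex \<times> complex \<Rightarrow> complex \<times> complex \<Rightarrow> bool" where
  "proj_eq z w \<longleftrightarrow> fst z * snd w = fst w * snd z"

definition two_periodic :: "nat \<Rightarrow> rat poly \<times> rat poly \<Rightarrow> complex \<times> complex \<Rightarrow> bool" where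
  "two_periodic d f z \<longleftrightarrow> is_P1_point z \<and> proj_eq (map_P1 d f (map_P1 d f z)) z
      \<and> \<not> proj_eq (map_P1 d f z) z"

text \<open>Ramification: z = (a,b) is a critical point iff z is a root of multiplicity
  at least 2 of the fibre form  P(x,y) Q(z) - Q(x,y) P(z)  (i.e. the ramification index
  e_z(phi) is at least 2).  The multiplicity is computed by restricting the fibre form to
  the line (a,b) + t (c,d) with (c,d) independent of (a,b).\<close>
definition fibre_line_poly :: "nat \<Rightarrow> rat poly \<times> rat poly \<Rightarrow> complex \<times> complex \<Rightarrow> complex poly" where
  "fibre_line_poly d f z =
     (let a = fst z; b = snd z;
          c = (if b = 0 then 0 else 1); e = (if b = 0 then 1 else 0);
          u = [:a, c:]; v = [:b, e:]
      in hom_poly d (fst f) u v * [:hom d (snd f) z:] - hom_poly d (snd f) u v * [:hom d (fst f) z:])"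

definition is_critical_point :: "nat \<Rightarrow> rat poly \<times> rat poly \<Rightarrow> complex \<times> complex \<Rightarrow> bool" where
  "is_critical_point d f z \<longleftrightarrow> is_P1_point z \<and> order 0 (fibre_line_poly d f z) \<ge> 2"

definition mob :: "complex \<times> complex \<times> complex \<times> complex \<Rightarrow> complex \<times> complex \<Rightarrow> complex \<times> complex" where
  "mob s z = (case s of (al, be, ga, de) \<Rightarrow> (al * fst z + be * snd z, ga * fst z + de * snd z))"

definition mob_det :: "complex \<times> complex \<times> complex \<times> complex \<Rightarrow> complex" where
  "mob_det s = (case s of (al, be, ga, de) \<Rightarrow> al * de - be * ga)"

definition is_identity_mob :: "complex \<times> complex \<times> complex \<times> complex \<Rightarrow> bool" where
  "is_identity_mob s = (case s of (al, be, ga, de) \<Rightarrow> be = 0 \<and> ga = 0 \<and> al = de)"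

definition in_Aut :: "nat \<Rightarrow> rat poly \<times> rat poly \<Rightarrow> complex \<times> complex \<times> complex \<times> complex \<Rightarrow> bool" where
  "in_Aut d f s \<longleftrightarrow>
     (case s of (al, be, ga, de) \<Rightarrow> algebraic al \<and> algebraic be \<and> algebraic ga \<and> algebraic de)
     \<and> mob_det s \<noteq> 0
     \<and> (\<forall>z. is_P1_point z \<longrightarrow> proj_eq (map_P1 d f (mob s z)) (mob s (map_P1 d f z)))"

definition Aut_nontrivial :: "nat \<Rightarrow> rat poly \<times> rat poly \<Rightarrow> bool" where
  "Aut_nontrivial d f \<longleftrightarrow> (\<exists>s. in_Aut d f s \<and> \<not> is_identity_mob s)"

definition lin_conj_over_Q :: "nat \<Rightarrow> rat poly \<times> rat poly \<Rightarrow> rat poly \<times> rat poly \<Rightarrow> bool" where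
  "lin_conj_over_Q d f g \<longleftrightarrow>
     (\<exists>al be ga de :: rat. al * de - be * ga \<noteq> 0 \<and>
        (\<forall>z. is_P1_point z \<longrightarrow>
           proj_eq (mob (of_rat al, of_rat be, of_rat ga, of_rat de) (map_P1 d g z))
                   (map_P1 d f (mob (of_rat al, of_rat be, of_rat ga, of_rat de) z))))"

definition psi :: "rat \<Rightarrow> rat poly \<times> rat poly" where
  "psi v = ([:-1, 2:], [:-1, 0, v:])"

end

theory Submission
  imports Defs "HOL-Computational_Algebra.Field_as_Ring" "HOL-Library.Product_Plus"
begin

text \<open>Write \<open>\<phi>\<close> as a pair of binary quadratic forms acting on homogeneous coordinates.
  If \<open>c\<close> is a critical point of exact period 2, then in the frame \<open>(\<phi>(c), c)\<close> the map becomes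
  \<open>(B x y + D y\<^sup>2, A x\<^sup>2)\<close>, and unless \<open>B = 0\<close> only scalar matrices commute with it. A nontrivial
  automorphism therefore makes \<open>\<phi>\<close> conjugate over \<open>\<complex>\<close> to \<open>J = (D y\<^sup>2, A x\<^sup>2)\<close>, i.e. to
  \<open>z \<mapsto> D / (A z\<^sup>2)\<close>. To descend to \<open>\<rat>\<close>, pick a rational point \<open>x\<close> in general position and
  write \<open>\<phi>\<^sup>2(x) = \<lambda> x + \<kappa> \<phi>(x)\<close> with \<open>\<lambda>, \<kappa> \<in> \<rat>\<close>. The rational matrix with columns \<open>\<lambda> x\<close> and
  \<open>\<kappa> \<phi>(x)\<close> sends \<open>\<infinity>, 0, 1\<close> to \<open>x, \<phi>(x), \<phi>\<^sup>2(x)\<close>, and a direct computation in the coordinates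
  of \<open>J\<close> shows that it conjugates \<open>\<phi>\<close> to \<open>\<psi>\<^sub>v\<close> with \<open>v = - \<lambda>\<^sup>2 / \<kappa>\<^sup>3\<close>. Finally \<open>v \<noteq> 4\<close> because
  \<open>\<psi>\<^sub>4\<close> is degenerate: numerator and denominator of \<open>(2x - 1) / (4x\<^sup>2 - 1)\<close> vanish at \<open>x = 1/2\<close>.\<close>

type_synonym 'a mat2 = "'a \<times> 'a \<times> 'a \<times> 'a"

type_synonym 'a qcoeffs = "('a \<times> 'a \<times> 'a) \<times> ('a \<times> 'a \<times> 'a)"

definition cross :: "'a::comm_ring_1 \<times> 'a \<Rightarrow> 'a \<times> 'a \<Rightarrow> 'a" where
  "cross z w = fst z * snd w - fst w * snd z"

definition scale_pair :: "'a::comm_ring_1 \<Rightarrow> 'a \<times> 'a \<Rightarrow> 'a \<times> 'a" where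
  "scale_pair l z = (l * fst z, l * snd z)"

definition mat2_app :: "'a::comm_ring_1 mat2 \<Rightarrow> 'a \<times> 'a \<Rightarrow> 'a \<times> 'a" where
  "mat2_app s z = (case s of (a, b, c, d) \<Rightarrow> (a * fst z + b * snd z, c * fst z + d * snd z))"

definition mat2_mul :: "'a::comm_ring_1 mat2 \<Rightarrow> 'a mat2 \<Rightarrow> 'a mat2" where
  "mat2_mul s t = (case s of (a, b, c, d) \<Rightarrow> case t of (e, f, g, h) \<Rightarrow>
     (a * e + b * g, a * f + b * h, c * e + d * g, c * f + d * h))"

definition mat2_adj :: "'a::comm_ring_1 mat2 \<Rightarrow> 'a mat2" where
  "mat2_adj s = (case s of (a, b, c, d) \<Rightarrow> (d, - b, - c, a))"

definition mat2_det :: "'a::comm_ring_1 mat2 \<Rightarrow> 'a" where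
  "mat2_det s = (case s of (a, b, c, d) \<Rightarrow> a * d - b * c)"

lemma cross_simp [simp]: "cross (x, y) (z, w) = x * w - z * y"
  by (simp add: cross_def)

lemma scale_pair_simp [simp]: "scale_pair l (x, y) = (l * x, l * y)"
  by (simp add: scale_pair_def)

lemma mat2_app_simp [simp]: "mat2_app (a, b, c, d) (x, y) = (a * x + b * y, c * x + d * y)"
  by (simp add: mat2_app_def)

lemma mat2_mul_simp [simp]:
  "mat2_mul (a, b, c, d) (e, f, g, h) = (a * e + b * g, a * f + b * h, c * e + d * g, c * f + d * h)"
  by (simp add: mat2_mul_def)

lemma mat2_adj_simp [simp]: "mat2_adj (a, b, c, d) = (d, - b, - c, a)"
  by (simp add: mat2_adj_def)

lemma mat2_det_simp [simp]: "mat2_det (a, b, c, d) = a * d - b * c"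
  by (simp add: mat2_det_def)

lemma mat2_app_mul: "mat2_app (mat2_mul s t) z = mat2_app s (mat2_app t z)"
  by (cases s; cases t; cases z) (simp add: algebra_simps)

lemma mat2_app_adj: "mat2_app s (mat2_app (mat2_adj s) z) = scale_pair (mat2_det s) z"
  by (cases s; cases z) (simp add: algebra_simps)

lemma mat2_adj_app: "mat2_app (mat2_adj s) (mat2_app s z) = scale_pair (mat2_det s) z"
  by (cases s; cases z) (simp add: algebra_simps)

lemma mat2_app_scale: "mat2_app s (scale_pair l z) = scale_pair l (mat2_app s z)"
  by (cases s; cases z) (simp add: algebra_simps)

lemma mat2_det_mul: "mat2_det (mat2_mul s t) = mat2_det s * mat2_det t"
  by (cases s; cases t) (simp add: algebra_simps)

lemma mat2_det_adj: "mat2_det (mat2_adj s) = mat2_det s"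
  by (cases s) (simp add: algebra_simps)

lemma mat2_adj_mul: "mat2_adj (mat2_mul s t) = mat2_mul (mat2_adj t) (mat2_adj s)"
  by (cases s; cases t) (simp add: algebra_simps)

lemma cross_mat2_app: "cross (mat2_app s z) (mat2_app s w) = mat2_det s * cross z w"
  by (cases s; cases z; cases w) (simp add: algebra_simps)

lemma cross_scale_left: "cross (scale_pair l z) w = l * cross z w"
  by (cases z; cases w) (simp add: algebra_simps)

lemma cross_scale_right: "cross z (scale_pair l w) = l * cross z w"
  by (cases z; cases w) (simp add: algebra_simps)

lemma cross_self [simp]: "cross z z = 0"
  by (cases z) simp

lemma scale_pair_scale_pair: "scale_pair a (scale_pair b z) = scale_pair (a * b) z"
  by (cases z) simp

lemma scale_pair_1 [simp]: "scale_pair 1 z = z"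
  by (cases z) simp

lemma scale_pair_cancel:
  fixes l :: "'a::field"
  assumes "l \<noteq> 0" "scale_pair l z = scale_pair l w"
  shows "z = w"
  using assms by (cases z; cases w) simp

text \<open>Projectively \<open>mat2_conj T F\<close> is \<open>T\<^sup>-\<^sup>1 \<circ> F \<circ> T\<close>; the adjugate avoids division.\<close>

definition mat2_conj :: "'a::comm_ring_1 mat2 \<Rightarrow> ('a \<times> 'a \<Rightarrow> 'a \<times> 'a) \<Rightarrow> 'a \<times> 'a \<Rightarrow> 'a \<times> 'a" where
  "mat2_conj T F z = mat2_app (mat2_adj T) (F (mat2_app T z))"

lemma mat2_conj_mul: "mat2_conj (mat2_mul T R) F z = mat2_conj R (mat2_conj T F) z"
  by (simp add: mat2_conj_def mat2_adj_mul mat2_app_mul)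

lemma mat2_app_conj: "mat2_app T (mat2_conj T F z) = scale_pair (mat2_det T) (F (mat2_app T z))"
  by (simp add: mat2_conj_def mat2_app_adj)

definition mat2_cols :: "'a::comm_ring_1 \<times> 'a \<Rightarrow> 'a \<times> 'a \<Rightarrow> 'a mat2" where
  "mat2_cols p q = (fst p, fst q, snd p, snd q)"

lemma mat2_mul_cols: "mat2_mul T (mat2_cols p q) = mat2_cols (mat2_app T p) (mat2_app T q)"
  by (cases T; cases p; cases q) (simp add: mat2_cols_def)

lemma mat2_det_cols: "mat2_det (mat2_cols p q) = cross p q"
  by (cases p; cases q) (simp add: mat2_cols_def)

lemma mat2_app_add: "mat2_app s (p + q) = mat2_app s p + mat2_app s q"
  by (cases s; cases p; cases q) (simp add: algebra_simps)

lemma mat2_app_inj: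
  fixes s :: "'a::field mat2"
  assumes "mat2_det s \<noteq> 0" "mat2_app s z = mat2_app s w"
  shows "z = w"
  using assms mat2_adj_app[of s] by (metis scale_pair_cancel)

lemma cramer_pair:
  fixes p q t :: "'a::field \<times> 'a"
  assumes "cross p q \<noteq> 0"
  shows "t = scale_pair (cross t q / cross p q) p + scale_pair (cross p t / cross p q) q"
proof -
  define \<delta> X Y where "\<delta> = cross p q" and "X = cross t q" and "Y = cross p t"
  have "\<delta> * fst t = X * fst p + Y * fst q" "\<delta> * snd t = X * snd p + Y * snd q"
    unfolding \<delta>_def X_def Y_def by (cases p; cases q; cases t; simp add: algebra_simps)+
  then show ?thesis
    using assms unfolding \<delta>_def[symmetric] X_def[symmetric] Y_def[symmetric]
    by (simp add: scale_pair_def prod_eq_iff field_simps)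
qed

lemma app_eq_of_mat2_conj_eq:
  fixes T :: "'a::field mat2"
  assumes "mat2_det T \<noteq> 0" "\<And>z. mat2_conj T F z = G z"
  shows "F (mat2_app T w) = scale_pair (1 / mat2_det T) (mat2_app T (G w))"
  using assms mat2_app_conj[of T F w] by (simp add: scale_pair_scale_pair)

text \<open>A coefficient triple \<open>(k0, k1, k2)\<close> stands for the binary quadratic form
  \<open>k0 y\<^sup>2 + k1 x y + k2 x\<^sup>2\<close>, so that \<open>ki\<close> is the coefficient of \<open>x\<^sup>i\<close> in the dehomogenisation.\<close>

definition qform :: "'a::comm_ring_1 \<times> 'a \<times> 'a \<Rightarrow> 'a \<times> 'a \<Rightarrow> 'a" where
  "qform k z = (case k of (k0, k1, k2) \<Rightarrow> k0 * snd z ^ 2 + k1 * (fst z * snd z) + k2 * fst z ^ 2)"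

definition qform_polar :: "'a::comm_ring_1 \<times> 'a \<times> 'a \<Rightarrow> 'a \<times> 'a \<Rightarrow> 'a \<times> 'a \<Rightarrow> 'a" where
  "qform_polar k z w = (case k of (k0, k1, k2) \<Rightarrow>
     2 * k0 * (snd z * snd w) + k1 * (fst z * snd w + snd z * fst w) + 2 * k2 * (fst z * fst w))"

definition qmap :: "'a::comm_ring_1 qcoeffs \<Rightarrow> 'a \<times> 'a \<Rightarrow> 'a \<times> 'a" where
  "qmap K z = (qform (fst K) z, qform (snd K) z)"

definition qmap_polar :: "'a::comm_ring_1 qcoeffs \<Rightarrow> 'a \<times> 'a \<Rightarrow> 'a \<times> 'a \<Rightarrow> 'a \<times> 'a" where
  "qmap_polar K z w = (qform_polar (fst K) z w, qform_polar (snd K) z w)"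

lemma qform_simp [simp]: "qform (k0, k1, k2) (x, y) = k0 * y ^ 2 + k1 * (x * y) + k2 * x ^ 2"
  by (simp add: qform_def)

lemma qform_polar_simp [simp]:
  "qform_polar (k0, k1, k2) (x, y) (z, w) = 2 * k0 * (y * w) + k1 * (x * w + y * z) + 2 * k2 * (x * z)"
  by (simp add: qform_polar_def)

lemma qmap_simp [simp]: "qmap (k, l) z = (qform k z, qform l z)"
  by (simp add: qmap_def)

lemma qmap_polar_simp [simp]: "qmap_polar (k, l) z w = (qform_polar k z w, qform_polar l z w)"
  by (simp add: qmap_polar_def)

lemma qmap_polar_commute: "qmap_polar K z w = qmap_polar K w z"
  by (cases K; cases "fst K"; cases "snd K"; cases z; cases w) (simp add: algebra_simps)

lemma qmap_scale: "qmap K (scale_pair l z) = scale_pair (l ^ 2) (qmap K z)"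
  by (cases K; cases "fst K"; cases "snd K"; cases z) (simp add: algebra_simps power2_eq_square)

lemma qform_linear_comb:
  "qform k (a * x + b * y, c * x + d * y) = x ^ 2 * qform k (a, c) + x * y * qform_polar k (a, c) (b, d) + y ^ 2 * qform k (b, d)"
  by (cases k) (simp add: algebra_simps power2_eq_square)

definition form_coeffs :: "rat poly \<Rightarrow> 'a::field_char_0 \<times> 'a \<times> 'a" where
  "form_coeffs p = (of_rat (coeff p 0), of_rat (coeff p 1), of_rat (coeff p 2))"

definition map_coeffs :: "rat poly \<times> rat poly \<Rightarrow> 'a::field_char_0 qcoeffs" where
  "map_coeffs f = (form_coeffs (fst f), form_coeffs (snd f))"

lemma hom_2_eq_qform: "hom 2 p z = qform (form_coeffs p) z"
  by (cases z) (simp add: hom_def form_coeffs_def numeral_2_eq_2 atMost_Suc algebra_simps power2_eq_square)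

lemma map_P1_2_eq_qmap: "map_P1 2 f z = qmap (map_coeffs f) z"
  by (simp add: map_P1_def map_coeffs_def hom_2_eq_qform qmap_def)

lemma mob_eq_mat2_app: "mob s z = mat2_app s z"
  by (cases s; cases z) (simp add: mob_def)

lemma mob_det_eq_mat2_det: "mob_det s = mat2_det s"
  by (cases s) (simp add: mob_det_def)

lemma proj_eq_iff_cross: "proj_eq z w \<longleftrightarrow> cross z w = 0"
  by (cases z; cases w) (simp add: proj_eq_def)

lemma qmap_map_coeffs_of_rat:
  "qmap (map_coeffs f) (map_prod of_rat of_rat z) = map_prod of_rat of_rat (qmap (map_coeffs f) z)"
  by (cases f; cases z) (simp add: map_coeffs_def form_coeffs_def of_rat_add of_rat_mult of_rat_power)

lemma cross_of_rat: "cross (map_prod of_rat of_rat z) (map_prod of_rat of_rat w) = of_rat (cross z w)"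
  by (cases z; cases w) (simp add: of_rat_diff of_rat_mult)

definition mat2_of_rat :: "rat mat2 \<Rightarrow> 'a::field_char_0 mat2" where
  "mat2_of_rat s = (case s of (a, b, c, d) \<Rightarrow> (of_rat a, of_rat b, of_rat c, of_rat d))"

lemma mat2_of_rat_cols:
  "mat2_of_rat (mat2_cols p q) = mat2_cols (map_prod of_rat of_rat p) (map_prod of_rat of_rat q)"
  by (cases p; cases q) (simp add: mat2_of_rat_def mat2_cols_def)

lemma mat2_det_of_rat: "mat2_det (mat2_of_rat s) = of_rat (mat2_det s)"
  by (cases s) (simp add: mat2_of_rat_def of_rat_diff of_rat_mult)

lemma map_prod_of_rat_scale:
  "map_prod of_rat of_rat (scale_pair l p) = scale_pair (of_rat l) (map_prod of_rat of_rat p)"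
  by (cases p) (simp add: of_rat_mult)

lemma map_prod_of_rat_add:
  "map_prod of_rat of_rat (p + q) = map_prod of_rat of_rat p + map_prod of_rat of_rat q"
  by (cases p; cases q) (simp add: of_rat_add)

lemma qmap_map_coeffs_psi: "qmap (map_coeffs (psi v)) z = qmap ((- 1, 2, 0), (- 1, 0, of_rat v)) z"
  by (cases z) (simp add: map_coeffs_def form_coeffs_def psi_def numeral_2_eq_2)

subsection \<open>Nondegeneracy\<close>

lemma map_poly_of_rat_add:
  "map_poly (of_rat :: rat \<Rightarrow> 'a::field_char_0) (p + q) = map_poly of_rat p + map_poly of_rat q"
  by (intro poly_eqI) (simp add: coeff_map_poly of_rat_add)

lemma map_poly_of_rat_mult:
  "map_poly (of_rat :: rat \<Rightarrow> 'a::field_char_0) (p * q) = map_poly of_rat p * map_poly of_rat q"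
  by (induction p rule: pCons_induct) (simp_all add: map_poly_pCons map_poly_smult map_poly_of_rat_add of_rat_mult)

lemma coprime_no_common_root:
  assumes "coprime p q" "poly (map_poly (of_rat :: rat \<Rightarrow> 'a::field_char_0) p) x = 0"
  shows "poly (map_poly of_rat q) x \<noteq> 0"
proof
  assume q: "poly (map_poly of_rat q) x = 0"
  obtain u w where "u * p + w * q = 1"
    using bezout_coefficients_fst_snd[of p q] assms(1) by (metis coprime_imp_gcd_eq_1)
  then have "poly (map_poly (of_rat :: rat \<Rightarrow> 'a) (u * p + w * q)) x = 1"
    by simp
  then show False
    using assms(2) q by (simp add: map_poly_of_rat_add map_poly_of_rat_mult)
qed

lemma poly_map_poly_of_rat_eq_qform:
  assumes "degree p \<le> 2"
  shows "poly (map_poly of_rat p) x = qform (form_coeffs p) (x, 1)"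
proof -
  have "poly (map_poly of_rat p) x = (\<Sum>i\<le>degree p. of_rat (coeff p i) * x ^ i)"
    by (simp add: poly_altdef degree_map_poly coeff_map_poly)
  also have "\<dots> = (\<Sum>i\<le>2. of_rat (coeff p i) * x ^ i)"
    using assms by (intro sum.mono_neutral_left) (auto simp: coeff_eq_0)
  finally show ?thesis
    by (simp add: form_coeffs_def numeral_2_eq_2 atMost_Suc algebra_simps power2_eq_square)
qed

lemma qform_dehomogenise:
  fixes a b :: "'a::field"
  assumes "b \<noteq> 0"
  shows "qform k (a, b) = b ^ 2 * qform k (a / b, 1)"
  using assms by (cases k) (simp add: field_simps power2_eq_square)

lemma qmap_map_coeffs_eq_0_imp:
  assumes "rat_map_degree f 2" and "qmap (map_coeffs f) z = (0, 0 :: 'a::field_char_0)"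
  shows "z = (0, 0)"
proof -
  obtain p q where f: "f = (p, q)" by (cases f)
  obtain a b where z: "z = (a, b)" by (cases z)
  have cop: "coprime p q" and deg: "max (degree p) (degree q) = 2"
    using assms(1) by (auto simp: rat_map_degree_def f)
  have zero: "qform (form_coeffs p) (a, b) = (0::'a)" "qform (form_coeffs q) (a, b) = (0::'a)"
    using assms(2) by (simp_all add: f z map_coeffs_def)
  have "b = 0"
  proof (rule ccontr)
    assume "b \<noteq> 0"
    have "poly (map_poly of_rat r) (a / b) = (0::'a)" if "r \<in> {p, q}" for r
    proof -
      have "degree r \<le> 2"
        using that deg by auto
      then have "qform (form_coeffs r) (a, b) = b ^ 2 * poly (map_poly of_rat r) (a / b)"
        using qform_dehomogenise[OF \<open>b \<noteq> 0\<close>] by (simp add: poly_map_poly_of_rat_eq_qform)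
      then show ?thesis
        using that zero \<open>b \<noteq> 0\<close> by auto
    qed
    then show False
      using coprime_no_common_root[OF cop] by blast
  qed
  moreover have "a = 0"
  proof (rule ccontr)
    assume "a \<noteq> 0"
    then have "coeff p 2 = 0" "coeff q 2 = 0"
      using zero \<open>b = 0\<close> by (simp_all add: form_coeffs_def)
    moreover have "degree p = 2 \<or> degree q = 2"
      using deg by (auto simp: max_def split: if_splits)
    ultimately show False
      by (metis leading_coeff_0_iff zero_neq_numeral degree_0)
  qed
  ultimately show ?thesis by (simp add: z)
qed

subsection \<open>Critical points\<close>

lemma hom_poly_2_line:
  "hom_poly 2 p [:a, c:] [:b, e:] =
     [:qform (form_coeffs p) (a, b), qform_polar (form_coeffs p) (a, b) (c, e), qform (form_coeffs p) (c, e):]"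
  by (rule poly_eq_poly_eq_iff[THEN iffD1], rule ext)
    (simp add: hom_poly_def poly_sum form_coeffs_def numeral_2_eq_2 atMost_Suc algebra_simps power2_eq_square)

lemma coeff_1_eq_0_if_order_ge_2:
  fixes p :: "'a::idom poly"
  assumes "order 0 p \<ge> 2"
  shows "coeff p 1 = 0"
proof -
  have "[:0, 1:] ^ 2 dvd p"
    using power_le_dvd[OF order_1[of 0 p] assms] by simp
  then obtain g where "p = [:0, 1:] ^ 2 * g" by auto
  then show ?thesis by (simp add: power2_eq_square)
qed

text \<open>The expression is linear in \<open>e\<close> and, by Euler's identity \<open>qmap_polar K c c = 2 qmap K c\<close>,
  vanishes at \<open>e = c\<close>; hence vanishing at one \<open>e\<close> independent of \<open>c\<close> forces it everywhere.\<close>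

lemma cross_qmap_polar_eq_0:
  fixes K :: "'a::field qcoeffs"
  assumes "cross c e0 \<noteq> 0" "cross (qmap_polar K c e0) (qmap K c) = 0"
  shows "cross (qmap_polar K c e) (qmap K c) = 0"
proof -
  obtain k0 k1 k2 l0 l1 l2 where K: "K = ((k0, k1, k2), (l0, l1, l2))" by (metis prod.exhaust)
  have "cross c e0 * cross (qmap_polar K c e) (qmap K c) = cross c e * cross (qmap_polar K c e0) (qmap K c)"
    by (cases c; cases e; cases e0) (simp add: K algebra_simps power2_eq_square)
  with assms show ?thesis by simp
qed

lemma critical_point_cross_qmap_polar:
  assumes "is_critical_point 2 f c"
  shows "cross (qmap_polar (map_coeffs f) c e) (qmap (map_coeffs f) c) = 0"
proof -
  obtain p q where f: "f = (p, q)" by (cases f)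
  obtain a b where c: "c = (a, b)" by (cases c)
  let ?K = "map_coeffs f :: complex qcoeffs"
  define e1 e2 :: complex where "e1 = (if b = 0 then 0 else 1)" and "e2 = (if b = 0 then 1 else 0)"
  have "c \<noteq> (0, 0)"
    using assms by (simp add: is_critical_point_def is_P1_point_def)
  then have indep: "cross c (e1, e2) \<noteq> 0"
    by (auto simp: c e1_def e2_def)
  have "fibre_line_poly 2 f c =
      [:fst (qmap ?K c), fst (qmap_polar ?K c (e1, e2)), fst (qmap ?K (e1, e2)):] * [:snd (qmap ?K c):]
    - [:snd (qmap ?K c), snd (qmap_polar ?K c (e1, e2)), snd (qmap ?K (e1, e2)):] * [:fst (qmap ?K c):]"
    unfolding fibre_line_poly_def Let_def f c fst_conv snd_conv e1_def[symmetric] e2_def[symmetric]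
    by (simp add: hom_poly_2_line hom_2_eq_qform map_coeffs_def)
  then have "cross (qmap_polar ?K c (e1, e2)) (qmap ?K c) = coeff (fibre_line_poly 2 f c) 1"
    by (simp add: cross_def)
  also have "\<dots> = 0"
    using assms by (intro coeff_1_eq_0_if_order_ge_2) (simp add: is_critical_point_def)
  finally show ?thesis
    using cross_qmap_polar_eq_0[OF indep] by blast
qed

subsection \<open>Automorphisms\<close>

definition commute_defect :: "'a::comm_ring_1 qcoeffs \<Rightarrow> 'a mat2 \<Rightarrow> 'a \<times> 'a \<Rightarrow> 'a" where
  "commute_defect K s z = cross (qmap K (mat2_app s z)) (mat2_app s (qmap K z))"

lemma commute_defect_scale: "commute_defect K s (scale_pair l z) = l ^ 4 * commute_defect K s z"
  by (simp add: commute_defect_def qmap_scale mat2_app_scale cross_scale_left cross_scale_right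
      power_add [symmetric])

definition qcoeffs_const :: "'a::comm_ring_1 qcoeffs \<Rightarrow> 'a poly qcoeffs" where
  "qcoeffs_const K = (case K of ((k0, k1, k2), (l0, l1, l2)) \<Rightarrow>
     (([:k0:], [:k1:], [:k2:]), ([:l0:], [:l1:], [:l2:])))"

definition mat2_const :: "'a::comm_ring_1 mat2 \<Rightarrow> 'a poly mat2" where
  "mat2_const s = (case s of (a, b, c, d) \<Rightarrow> ([:a:], [:b:], [:c:], [:d:]))"

lemma poly_commute_defect_const:
  "poly (commute_defect (qcoeffs_const K) (mat2_const s) (U, V)) t = commute_defect K s (poly U t, poly V t)"
proof -
  obtain k0 k1 k2 l0 l1 l2 where K: "K = ((k0, k1, k2), (l0, l1, l2))" by (metis prod.exhaust)
  obtain a b c d where s: "s = (a, b, c, d)" by (metis prod.exhaust)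
  show ?thesis
    by (simp add: K s qcoeffs_const_def mat2_const_def commute_defect_def)
qed

lemma poly_eq_0_if_rat_roots:
  fixes P :: "'a::field_char_0 poly"
  assumes "\<And>t::rat. poly P (of_rat t) = 0"
  shows "P = 0"
proof (rule ccontr)
  assume "P \<noteq> 0"
  then have "finite {x. poly P x = 0}"
    by (rule poly_roots_finite)
  moreover have "range (of_rat :: rat \<Rightarrow> 'a) \<subseteq> {x. poly P x = 0}"
    using assms by auto
  ultimately have "finite (range (of_rat :: rat \<Rightarrow> 'a))"
    by (rule finite_subset[rotated])
  moreover have "inj (of_rat :: rat \<Rightarrow> 'a)"
    by (simp add: inj_def)
  ultimately show False
    using finite_imageD infinite_UNIV_char_0 by blast
qed

text \<open>The defect is a binary quartic form in \<open>z\<close>, hence determined by its values at rational points.\<close>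

lemma commute_defect_eq_0_if_rat:
  fixes K :: "'a::field_char_0 qcoeffs"
  assumes rat: "\<And>a b. (a, b) \<noteq> (0, 0) \<Longrightarrow> commute_defect K s (of_rat a, of_rat b) = 0"
  shows "commute_defect K s z = 0"
proof -
  let ?P = "commute_defect (qcoeffs_const K) (mat2_const s) ([:0, 1:], 1)"
  have "?P = 0"
    by (rule poly_eq_0_if_rat_roots) (use rat[of _ 1] in \<open>simp add: poly_commute_defect_const\<close>)
  then have affine: "commute_defect K s (x, 1) = 0" for x
    using poly_commute_defect_const[of K s "[:0, 1:]" 1 x] by simp
  obtain x y where z: "z = (x, y)" by (cases z)
  show ?thesis
  proof (cases "y = 0")
    case True
    then have "commute_defect K s z = x ^ 4 * commute_defect K s (1, 0)"
      using commute_defect_scale[of K s x "(1, 0)"] by (simp add: z)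
    then show ?thesis
      using rat[of 1 0] by simp
  next
    case False
    then have "commute_defect K s z = y ^ 4 * commute_defect K s (x / y, 1)"
      using commute_defect_scale[of K s y "(x / y, 1)"] by (simp add: z)
    then show ?thesis
      using affine by simp
  qed
qed

lemma in_Aut_commute_defect:
  assumes "in_Aut 2 f s"
  shows "commute_defect (map_coeffs f) s z = 0"
proof (rule commute_defect_eq_0_if_rat)
  fix a b :: rat
  assume "(a, b) \<noteq> (0, 0)"
  then have "is_P1_point (of_rat a, of_rat b)"
    by (auto simp: is_P1_point_def intro!: rat_imp_algebraic)
  then show "commute_defect (map_coeffs f) s (of_rat a, of_rat b) = 0"
    using assms by (simp add: in_Aut_def commute_defect_def proj_eq_iff_cross map_P1_2_eq_qmap mob_eq_mat2_app)
qed

subsection \<open>Normal form\<close>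

text \<open>In the frame whose columns are \<open>\<phi>(c)\<close> and \<open>c\<close>, the 2-cycle \<open>c \<mapsto> \<phi>(c) \<mapsto> c\<close> becomes
  \<open>[0:1] \<mapsto> [1:0] \<mapsto> [0:1]\<close>; criticality of \<open>c\<close> kills the \<open>x y\<close>-term of the second coordinate.\<close>

lemma two_cycle_frame:
  fixes K :: "'a::field qcoeffs"
  assumes nondeg: "\<And>z. qmap K z = (0, 0) \<Longrightarrow> z = (0, 0)"
    and "c \<noteq> (0, 0)"
    and crit: "cross (qmap_polar K c (qmap K c)) (qmap K c) = 0"
    and period: "cross (qmap K (qmap K c)) c = 0" "cross (qmap K c) c \<noteq> 0"
  defines "T \<equiv> mat2_cols (qmap K c) c"
  shows "\<exists>A B. A \<noteq> 0 \<and> (\<forall>z. mat2_conj T (qmap K) z = qmap ((mat2_det T, B, 0), (0, 0, A)) z)"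
proof -
  obtain c1 c2 where c: "c = (c1, c2)" by (cases c)
  obtain d1 d2 where d: "qmap K c = (d1, d2)" by (cases "qmap K c")
  obtain e1 e2 where e: "qmap K (d1, d2) = (e1, e2)" by (cases "qmap K (d1, d2)")
  obtain b1 b2 where b: "qmap_polar K (d1, d2) c = (b1, b2)" by (cases "qmap_polar K (d1, d2) c")
  obtain k l where K: "K = (k, l)" by (cases K)
  define A where "A = d1 * e2 - e1 * d2"
  have T: "T = (d1, c1, d2, c2)"
    unfolding T_def d using c by (simp add: mat2_cols_def)
  have per: "e1 * c2 - c1 * e2 = 0" and det: "d1 * c2 - c1 * d2 \<noteq> 0"
    using period[unfolded d, unfolded e] by (simp_all add: c)
  have polar: "b1 * d2 - d1 * b2 = 0"
    using crit[unfolded d, unfolded qmap_polar_commute[of K c] b] by simp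
  have "mat2_conj T (qmap K) (x, y) = qmap ((mat2_det T, c2 * b1 - c1 * b2, 0), (0, 0, A)) (x, y)" for x y
  proof -
    have "qmap K (mat2_app T (x, y)) = (x\<^sup>2 * e1 + x * y * b1 + y\<^sup>2 * d1, x\<^sup>2 * e2 + x * y * b2 + y\<^sup>2 * d2)"
      using b d e by (simp add: K T c qform_linear_comb)
    moreover have "c2 * (x\<^sup>2 * e1 + x * y * b1 + y\<^sup>2 * d1) - c1 * (x\<^sup>2 * e2 + x * y * b2 + y\<^sup>2 * d2)
        = (d1 * c2 - c1 * d2) * y\<^sup>2 + (c2 * b1 - c1 * b2) * (x * y)"
      using per by algebra
    moreover have "d1 * (x\<^sup>2 * e2 + x * y * b2 + y\<^sup>2 * d2) - d2 * (x\<^sup>2 * e1 + x * y * b1 + y\<^sup>2 * d1)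
        = A * x\<^sup>2"
      using polar unfolding A_def by algebra
    ultimately show ?thesis
      by (simp add: mat2_conj_def T)
  qed
  moreover have "A \<noteq> 0"
  proof
    assume "A = 0"
    have "e1 * (d1 * c2 - c1 * d2) = 0" "e2 * (d1 * c2 - c1 * d2) = 0"
      using per \<open>A = 0\<close> unfolding A_def by algebra+
    with det have "(e1, e2) = (0, 0)" by simp
    then show False
      using nondeg e d \<open>c \<noteq> (0, 0)\<close> by metis
  qed
  ultimately show ?thesis
    by (metis prod.exhaust)
qed

lemma commute_defect_conj:
  assumes "\<And>z. mat2_conj T (qmap K) z = qmap K' z"
  shows "commute_defect K' (mat2_mul (mat2_adj T) (mat2_mul s T)) z
    = mat2_det T ^ 4 * commute_defect K s (mat2_app T z)"
proof -
  let ?S = "mat2_mul (mat2_adj T) (mat2_mul s T)"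
  have "qmap K' (mat2_app ?S z) = scale_pair (mat2_det T ^ 2) (mat2_app (mat2_adj T) (qmap K (mat2_app s (mat2_app T z))))"
    unfolding assms[symmetric] by (simp add: mat2_conj_def mat2_app_mul mat2_app_adj qmap_scale mat2_app_scale)
  moreover have "mat2_app ?S (qmap K' z) = scale_pair (mat2_det T) (mat2_app (mat2_adj T) (mat2_app s (qmap K (mat2_app T z))))"
    unfolding assms[symmetric] by (simp add: mat2_conj_def mat2_app_mul mat2_app_adj mat2_app_scale)
  ultimately show ?thesis
    by (simp add: commute_defect_def cross_scale_left cross_scale_right cross_mat2_app mat2_det_adj
        power_numeral_reduce)
qed

lemma is_identity_mob_conj:
  assumes "mat2_det T \<noteq> 0" "is_identity_mob (mat2_mul (mat2_adj T) (mat2_mul s T))"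
  shows "is_identity_mob s"
proof -
  obtain t11 t12 t21 t22 where T: "T = (t11, t12, t21, t22)" by (metis prod.exhaust)
  obtain a b c d where s: "s = (a, b, c, d)" by (metis prod.exhaust)
  obtain l where "mat2_mul (mat2_adj T) (mat2_mul s T) = (l, 0, 0, l)"
    using assms(2) by (auto simp: is_identity_mob_def split: prod.splits)
  then have "mat2_mul T (mat2_mul (mat2_mul (mat2_adj T) (mat2_mul s T)) (mat2_adj T))
      = (l * mat2_det T, 0, 0, l * mat2_det T)"
    by (simp add: T algebra_simps)
  moreover have "mat2_mul T (mat2_mul (mat2_mul (mat2_adj T) (mat2_mul s T)) (mat2_adj T))
      = (mat2_det T ^ 2 * a, mat2_det T ^ 2 * b, mat2_det T ^ 2 * c, mat2_det T ^ 2 * d)"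
    by (simp add: T s algebra_simps power2_eq_square)
  ultimately have "b = 0" "c = 0" "mat2_det T ^ 2 * a = mat2_det T ^ 2 * d"
    using assms(1) by simp_all
  then show ?thesis
    using assms(1) by (simp add: s is_identity_mob_def)
qed

lemma two_cycle_form_commute_eqs:
  fixes A B D :: "'a::field"
  assumes A: "A \<noteq> 0" and D: "D \<noteq> 0"
    and comm: "\<And>z. commute_defect ((D, B, 0), (0, 0, A)) (a, b, c, d) z = 0"
  shows "c * d * (B * a + D * c) = A * a\<^sup>2 * b" and "c * d * (B * b + D * d) = A * a * b\<^sup>2"
proof -
  have "A * (c * d * (B * a + D * c) - A * a\<^sup>2 * b) = 0"
    using comm[of "(1, 0)"] by (simp add: commute_defect_def algebra_simps power2_eq_square)
  then show "c * d * (B * a + D * c) = A * a\<^sup>2 * b"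
    using A by simp
  have "D * (c * d * (B * b + D * d) - A * a * b\<^sup>2) = 0"
    using comm[of "(0, 1)"] by (simp add: commute_defect_def algebra_simps power2_eq_square)
  then show "c * d * (B * b + D * d) = A * a * b\<^sup>2"
    using D by simp
qed

lemma two_cycle_form_commute_upper:
  fixes A B D :: "'a::field_char_0"
  assumes A: "A \<noteq> 0" and D: "D \<noteq> 0" and B: "B \<noteq> 0" and det: "a * d - b * c \<noteq> 0"
    and comm: "\<And>z. commute_defect ((D, B, 0), (0, 0, A)) (a, b, c, d) z = 0"
  shows "b = 0"
proof (rule ccontr)
  assume "b \<noteq> 0"
  note eqs = two_cycle_form_commute_eqs[OF A D comm]
  show False
  proof (cases "a = 0")
    case True
    then have "c \<noteq> 0"
      using det by auto
    moreover have "D * c * c * d = 0"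
      using eqs(1) True by (simp add: algebra_simps)
    ultimately have "d = 0"
      using D by simp
    then have "c * c * D * B = 0"
      using comm[of "(1, 1)"] comm[of "(1, -1)"] comm[of "(2, 1)"] True
      by (simp add: commute_defect_def algebra_simps power2_eq_square) algebra
    then show False
      using D B \<open>c \<noteq> 0\<close> by simp
  next
    case False
    have "c * d * D * (b * c - a * d) = 0"
      using eqs by algebra
    then have "c * d = 0"
      using D det by (auto simp: algebra_simps)
    then have "A * a\<^sup>2 * b = 0"
      using eqs(1) by auto
    then show False
      using A False \<open>b \<noteq> 0\<close> by simp
  qed
qed

lemma two_cycle_form_centralizer:
  fixes A B D :: complex
  assumes A: "A \<noteq> 0" and D: "D \<noteq> 0" and B: "B \<noteq> 0" and det: "mat2_det (a, b, c, d) \<noteq> 0"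
    and comm: "\<And>z. commute_defect ((D, B, 0), (0, 0, A)) (a, b, c, d) z = 0"
  shows "is_identity_mob (a, b, c, d)"
proof -
  have det': "a * d - b * c \<noteq> 0"
    using det by simp
  have b: "b = 0"
    using two_cycle_form_commute_upper[OF A D B det' comm] .
  then have "d \<noteq> 0"
    using det' by auto
  moreover have "D * D * c * (d * d) = 0"
    using two_cycle_form_commute_eqs(2)[OF A D comm] b by (simp add: algebra_simps power2_eq_square)
  ultimately have c: "c = 0"
    using D by simp
  have "A * (B * a * (d\<^sup>2 - a\<^sup>2) + D * (d ^ 3 - a ^ 3)) = 0"
    and "A * (B * a * (d\<^sup>2 - a\<^sup>2) - D * (d ^ 3 - a ^ 3)) = 0"
    using comm[of "(1, 1)"] comm[of "(1, -1)"] b c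
    by (simp_all add: commute_defect_def algebra_simps power2_eq_square power3_eq_cube)
  then have "B * a * (d\<^sup>2 - a\<^sup>2) = 0" "D * (d ^ 3 - a ^ 3) = 0"
    using A by algebra+
  then have "d\<^sup>2 = a\<^sup>2" "d ^ 3 = a ^ 3"
    using B D det' b by auto
  then have "a\<^sup>2 * (d - a) = 0"
    by (simp add: algebra_simps power2_eq_square power3_eq_cube)
  then have "d = a"
    using det' b by auto
  then show ?thesis
    using b c by (simp add: is_identity_mob_def)
qed

lemma normal_form_of_critical_two_cycle:
  fixes K :: "complex qcoeffs"
  assumes nondeg: "\<And>z. qmap K z = (0, 0) \<Longrightarrow> z = (0, 0)"
    and "c \<noteq> (0, 0)"
    and crit: "\<And>e. cross (qmap_polar K c e) (qmap K c) = 0"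
    and period: "cross (qmap K (qmap K c)) c = 0" "cross (qmap K c) c \<noteq> 0"
    and aut: "\<And>z. commute_defect K s z = 0" "mat2_det s \<noteq> 0" "\<not> is_identity_mob s"
  shows "\<exists>T A. mat2_det T \<noteq> 0 \<and> A \<noteq> 0 \<and>
    (\<forall>z. mat2_conj T (qmap K) z = qmap ((mat2_det T, 0, 0), (0, 0, A)) z)"
proof -
  define T where "T = mat2_cols (qmap K c) c"
  have det: "mat2_det T \<noteq> 0"
    using period(2) by (simp add: T_def mat2_det_cols)
  obtain A B where A: "A \<noteq> 0"
    and nf: "\<And>z. mat2_conj T (qmap K) z = qmap ((mat2_det T, B, 0), (0, 0, A)) z"
    using two_cycle_frame[OF nondeg \<open>c \<noteq> (0, 0)\<close> crit period] unfolding T_def by blast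
  have "B = 0"
  proof (rule ccontr)
    assume "B \<noteq> 0"
    obtain a b c' d where S: "mat2_mul (mat2_adj T) (mat2_mul s T) = (a, b, c', d)"
      by (metis prod.exhaust)
    have "mat2_det (a, b, c', d) \<noteq> 0"
      using det aut(2) by (simp flip: S add: mat2_det_mul mat2_det_adj)
    moreover have "commute_defect ((mat2_det T, B, 0), (0, 0, A)) (a, b, c', d) z = 0" for z
      using commute_defect_conj[OF nf, of s z] aut(1) S by simp
    ultimately have "is_identity_mob (a, b, c', d)"
      using two_cycle_form_centralizer[OF A det \<open>B \<noteq> 0\<close>] by blast
    then show False
      using is_identity_mob_conj[OF det] aut(3) S by simp
  qed
  then show ?thesis
    using det A nf by blast
qed

lemma critical_two_cycle_normal_form:
  assumes "rat_map_degree f 2" and crit: "is_critical_point 2 f c" and per: "two_periodic 2 f c"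
    and aut: "in_Aut 2 f s" "\<not> is_identity_mob s"
  shows "\<exists>T A. mat2_det T \<noteq> 0 \<and> A \<noteq> 0 \<and>
    (\<forall>z :: complex \<times> complex. mat2_conj T (qmap (map_coeffs f)) z = qmap ((mat2_det T, 0, 0), (0, 0, A)) z)"
proof (rule normal_form_of_critical_two_cycle)
  show "c \<noteq> (0, 0)"
    using crit by (simp add: is_critical_point_def is_P1_point_def)
  show "cross (qmap (map_coeffs f) (qmap (map_coeffs f) c)) c = 0" "cross (qmap (map_coeffs f) c) c \<noteq> 0"
    using per by (simp_all add: two_periodic_def proj_eq_iff_cross map_P1_2_eq_qmap)
  show "mat2_det s \<noteq> 0"
    using aut(1) by (simp add: in_Aut_def mob_det_eq_mat2_det)
qed (use qmap_map_coeffs_eq_0_imp[OF assms(1)] critical_point_cross_qmap_polar[OF crit]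
    in_Aut_commute_defect[OF aut(1)] aut(2) in auto)

subsection \<open>Descent to the rationals\<close>

lemma mat2_preimage_affine_line:
  fixes T :: "'a::field mat2"
  assumes "mat2_det T \<noteq> 0"
  obtains U1 U2 x0 where "\<And>x. mat2_app T (poly U1 x, poly U2 x) = (x, 1)"
    and "U1 \<noteq> 0" "U2 \<noteq> 0" "poly U1 x0 = 0 \<or> poly U2 x0 = 0"
proof -
  obtain t11 t12 t21 t22 where T: "T = (t11, t12, t21, t22)" by (metis prod.exhaust)
  define D where "D = mat2_det T"
  have D: "D \<noteq> 0" "D = t11 * t22 - t12 * t21"
    using assms by (simp_all add: D_def T)
  define U1 where "U1 = [:- t12 / D, t22 / D:]"
  define U2 where "U2 = [:t11 / D, - t21 / D:]"
  have "(poly U1 x, poly U2 x) = scale_pair (1 / D) (mat2_app (mat2_adj T) (x, 1))" for x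
    using D(1) by (simp add: T U1_def U2_def field_simps)
  then have "mat2_app T (poly U1 x, poly U2 x) = (x, 1)" for x
    using D(1) by (simp add: mat2_app_scale mat2_app_adj D_def)
  moreover have "U1 \<noteq> 0" "U2 \<noteq> 0"
    using D by (auto simp: U1_def U2_def)
  moreover have "poly U1 (t12 / t22) = 0 \<or> poly U2 (t11 / t21) = 0"
    using D by (cases "t22 = 0") (auto simp: U1_def U2_def)
  ultimately show ?thesis
    using that by blast
qed

text \<open>For \<open>a = A\<^sup>2\<close> and \<open>b = D\<^sup>2\<close> the condition says that \<open>u\<close>, \<open>J u\<close> and \<open>J\<^sup>2 u\<close> are pairwise distinct
  points of the projective line, where \<open>J = (D y\<^sup>2, A x\<^sup>2)\<close>.\<close>

lemma exists_rat_point_avoiding_zeros: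
  fixes T :: "'a::field_char_0 mat2"
  assumes "mat2_det T \<noteq> 0" "a \<noteq> 0" "b \<noteq> 0"
  shows "\<exists>k::rat. \<exists>u1 u2. mat2_app T (u1, u2) = (of_rat k, 1) \<and> u1 * u2 * (a * u1 ^ 6 - b * u2 ^ 6) \<noteq> 0"
proof -
  obtain U1 U2 x0 where inv: "\<And>x. mat2_app T (poly U1 x, poly U2 x) = (x, 1)"
    and "U1 \<noteq> 0" "U2 \<noteq> 0" and root: "poly U1 x0 = 0 \<or> poly U2 x0 = 0"
    using mat2_preimage_affine_line[OF assms(1)] by blast
  have "smult a (U1 ^ 6) - smult b (U2 ^ 6) \<noteq> 0"
  proof
    assume "smult a (U1 ^ 6) - smult b (U2 ^ 6) = 0"
    then have "a * poly U1 x0 ^ 6 = b * poly U2 x0 ^ 6"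
      by (metis eq_iff_diff_eq_0 poly_power poly_smult)
    then have "(poly U1 x0, poly U2 x0) = (0, 0)"
      using root assms(2,3) by auto
    then show False
      using inv[of x0] by (cases T) simp
  qed
  with \<open>U1 \<noteq> 0\<close> \<open>U2 \<noteq> 0\<close> have "U1 * U2 * (smult a (U1 ^ 6) - smult b (U2 ^ 6)) \<noteq> 0"
    by simp
  then obtain k :: rat where "poly (U1 * U2 * (smult a (U1 ^ 6) - smult b (U2 ^ 6))) (of_rat k) \<noteq> 0"
    using poly_eq_0_if_rat_roots by blast
  then show ?thesis
    using inv[of "of_rat k"] by auto
qed

lemma orbit_frame_relations:
  fixes D A u1 u2 l m :: "'a::field"
  assumes H: "u1 * u2 * (A\<^sup>2 * u1 ^ 6 - D\<^sup>2 * u2 ^ 6) \<noteq> 0" and D: "D \<noteq> 0"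
    and rel: "scale_pair l (u1, u2) + scale_pair m (qmap ((D, 0, 0), (0, 0, A)) (u1, u2))
      = scale_pair (1 / D ^ 3) (qmap ((D, 0, 0), (0, 0, A)) (qmap ((D, 0, 0), (0, 0, A)) (u1, u2)))"
  shows "l * u1 * u2 + m * (A * u1 ^ 3 + D * u2 ^ 3) = 0" and "A * u1 * u2 + m * D\<^sup>2 = 0"
proof -
  have r1: "D\<^sup>2 * (l * u1 + m * (D * u2\<^sup>2)) = A\<^sup>2 * u1 ^ 4"
    and r2: "D * (l * u2 + m * (A * u1\<^sup>2)) = A * u2 ^ 4"
    using rel D by (simp_all add: field_simps power2_eq_square power3_eq_cube power4_eq_xxxx)
  define s where "s = A * u1 ^ 3 - D * u2 ^ 3"
  have "A\<^sup>2 * u1 ^ 6 - D\<^sup>2 * u2 ^ 6 = s * (A * u1 ^ 3 + D * u2 ^ 3)"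
    unfolding s_def by algebra
  then have s: "s \<noteq> 0"
    using H by auto
  have "D\<^sup>2 * s * (l * u1 * u2 + m * (A * u1 ^ 3 + D * u2 ^ 3)) = 0"
    using r1 r2 unfolding s_def by algebra
  then show "l * u1 * u2 + m * (A * u1 ^ 3 + D * u2 ^ 3) = 0"
    using s D by simp
  have "D\<^sup>2 * s * (A * u1 * u2 + m * D\<^sup>2) = 0"
    using r1 r2 unfolding s_def by algebra
  then show "A * u1 * u2 + m * D\<^sup>2 = 0"
    using s D by simp
qed

lemma orbit_frame_conj_identity:
  fixes D A u1 u2 l m :: "'a::field"
  assumes E1: "l * u1 * u2 + m * (A * u1 ^ 3 + D * u2 ^ 3) = 0" and E2: "A * u1 * u2 + m * D\<^sup>2 = 0"
    and m: "m \<noteq> 0" and D: "D \<noteq> 0"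
  defines "R \<equiv> mat2_cols (scale_pair l (u1, u2)) (scale_pair m (qmap ((D, 0, 0), (0, 0, A)) (u1, u2)))"
    and "h \<equiv> m\<^sup>2 * A * D * (A * u1 ^ 3 - D * u2 ^ 3) * l * u1 * u2"
  shows "mat2_conj R (qmap ((D, 0, 0), (0, 0, A))) z
    = scale_pair h (qmap ((- 1, 2, 0), (- 1, 0, - (l\<^sup>2) / (m * D) ^ 3)) z)"
proof -
  obtain x y where z: "z = (x, y)" by (cases z)
  define v where "v = - (l\<^sup>2) / (m * D) ^ 3"
  define s where "s = A * u1 ^ 3 - D * u2 ^ 3"
  have h: "h = m\<^sup>2 * A * D * s * l * u1 * u2"
    by (simp add: h_def s_def)
  have first: "m * (A * u1\<^sup>2) * (D * (l * u2 * x + m * (A * u1\<^sup>2) * y)\<^sup>2)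
      - m * (D * u2\<^sup>2) * (A * (l * u1 * x + m * (D * u2\<^sup>2) * y)\<^sup>2) = h * (2 * x * y - y\<^sup>2)"
    unfolding h s_def using E1 by algebra
  have hv: "h * v = l ^ 3 * s"
  proof -
    have "h * v = m\<^sup>2 * D * s * l * (- m * D\<^sup>2) * v"
      unfolding h using E2 by algebra
    also have "\<dots> = l ^ 3 * s"
      using m D by (simp add: v_def field_simps power2_eq_square power3_eq_cube)
    finally show ?thesis .
  qed
  have second: "l * u1 * (A * (l * u1 * x + m * (D * u2\<^sup>2) * y)\<^sup>2)
      - l * u2 * (D * (l * u2 * x + m * (A * u1\<^sup>2) * y)\<^sup>2) = h * (v * x\<^sup>2 - y\<^sup>2)"
    using hv unfolding h s_def by algebra
  have "mat2_conj R (qmap ((D, 0, 0), (0, 0, A))) (x, y) = scale_pair h (qmap ((- 1, 2, 0), (- 1, 0, v)) (x, y))"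
    using first second by (simp add: R_def mat2_cols_def mat2_conj_def algebra_simps)
  then show ?thesis
    by (simp add: z v_def)
qed

text \<open>By \<open>rel\<close>, the frame matrix sends \<open>\<infinity>, 0, 1\<close> to \<open>u, J u, J\<^sup>2 u\<close> for \<open>J = (D y\<^sup>2, A x\<^sup>2)\<close>.\<close>

lemma orbit_frame_conj_psi:
  fixes D A u1 u2 l m :: "'a::field"
  assumes H: "u1 * u2 * (A\<^sup>2 * u1 ^ 6 - D\<^sup>2 * u2 ^ 6) \<noteq> 0" and D: "D \<noteq> 0" and A: "A \<noteq> 0"
    and rel: "scale_pair l (u1, u2) + scale_pair m (qmap ((D, 0, 0), (0, 0, A)) (u1, u2))
      = scale_pair (1 / D ^ 3) (qmap ((D, 0, 0), (0, 0, A)) (qmap ((D, 0, 0), (0, 0, A)) (u1, u2)))"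
  shows "l \<noteq> 0 \<and> m \<noteq> 0 \<and> (\<exists>h. \<forall>z.
    mat2_conj (mat2_cols (scale_pair l (u1, u2)) (scale_pair m (qmap ((D, 0, 0), (0, 0, A)) (u1, u2))))
      (qmap ((D, 0, 0), (0, 0, A))) z
    = scale_pair h (qmap ((- 1, 2, 0), (- 1, 0, - (l\<^sup>2) / (m * D) ^ 3)) z))"
proof -
  note E = orbit_frame_relations[OF H D rel]
  have "A\<^sup>2 * u1 ^ 6 - D\<^sup>2 * u2 ^ 6 = (A * u1 ^ 3 - D * u2 ^ 3) * (A * u1 ^ 3 + D * u2 ^ 3)"
    by algebra
  then have "u1 \<noteq> 0" "u2 \<noteq> 0" "A * u1 ^ 3 + D * u2 ^ 3 \<noteq> 0"
    using H by auto
  then have "m \<noteq> 0" "l \<noteq> 0"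
    using E A D by (auto simp: add_eq_0_iff)
  then show ?thesis
    using orbit_frame_conj_identity[OF E \<open>m \<noteq> 0\<close> D] by blast
qed

lemma orbit_point_not_fixed:
  fixes T :: "'a::field mat2"
  assumes det: "mat2_det T \<noteq> 0"
    and nf: "\<And>z. mat2_conj T F z = qmap ((mat2_det T, 0, 0), (0, 0, A)) z"
    and H: "u1 * u2 * (A\<^sup>2 * u1 ^ 6 - (mat2_det T)\<^sup>2 * u2 ^ 6) \<noteq> 0"
  shows "cross (mat2_app T (u1, u2)) (F (mat2_app T (u1, u2))) \<noteq> 0"
proof -
  let ?D = "mat2_det T"
  have "cross (mat2_app T (u1, u2)) (F (mat2_app T (u1, u2))) = A * u1 ^ 3 - ?D * u2 ^ 3"
    using det by (simp add: app_eq_of_mat2_conj_eq[OF det nf] cross_scale_right cross_mat2_app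
        power2_eq_square power3_eq_cube algebra_simps)
  moreover have "A\<^sup>2 * u1 ^ 6 - ?D\<^sup>2 * u2 ^ 6 = (A * u1 ^ 3 - ?D * u2 ^ 3) * (A * u1 ^ 3 + ?D * u2 ^ 3)"
    by algebra
  ultimately show ?thesis
    using H by auto
qed

lemma conj_orbit_frame_eq_psi:
  fixes T :: "'a::field mat2"
  assumes det: "mat2_det T \<noteq> 0" and A: "A \<noteq> 0"
    and nf: "\<And>z. mat2_conj T F z = qmap ((mat2_det T, 0, 0), (0, 0, A)) z"
    and H: "u1 * u2 * (A\<^sup>2 * u1 ^ 6 - (mat2_det T)\<^sup>2 * u2 ^ 6) \<noteq> 0"
    and frame: "F (F (mat2_app T (u1, u2)))
      = scale_pair l (mat2_app T (u1, u2)) + scale_pair m (F (mat2_app T (u1, u2)))"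
  shows "l \<noteq> 0 \<and> m \<noteq> 0 \<and> (\<exists>h. \<forall>z.
    mat2_conj (mat2_cols (scale_pair l (mat2_app T (u1, u2))) (scale_pair m (F (mat2_app T (u1, u2))))) F z
    = scale_pair h (qmap ((- 1, 2, 0), (- 1, 0, - l\<^sup>2 / m ^ 3)) z))"
proof -
  define D where "D = mat2_det T"
  define J where "J = qmap ((D, 0, 0), (0, 0, A))"
  define u where "u = (u1, u2)"
  have D: "D \<noteq> 0"
    using det by (simp add: D_def)
  have F_T: "F (mat2_app T w) = scale_pair (1 / D) (mat2_app T (J w))" for w
    using app_eq_of_mat2_conj_eq[OF det nf] by (simp add: D_def J_def)
  have J_scale: "J (scale_pair c w) = scale_pair (c\<^sup>2) (J w)" for c w
    by (simp add: J_def qmap_scale)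
  have "F (F (mat2_app T u)) = F (mat2_app T (scale_pair (1 / D) (J u)))"
    by (simp add: F_T mat2_app_scale)
  also have "\<dots> = scale_pair (1 / D ^ 3) (mat2_app T (J (J u)))"
    unfolding F_T by (simp add: J_scale mat2_app_scale scale_pair_scale_pair power2_eq_square power3_eq_cube
        mult.assoc)
  finally have t: "F (F (mat2_app T u)) = scale_pair (1 / D ^ 3) (mat2_app T (J (J u)))" .
  define R where "R = mat2_cols (scale_pair l u) (scale_pair (m / D) (J u))"
  have \<sigma>: "mat2_cols (scale_pair l (mat2_app T u)) (scale_pair m (F (mat2_app T u))) = mat2_mul T R"
    using D by (simp add: R_def mat2_mul_cols mat2_app_scale F_T scale_pair_scale_pair)
  have "mat2_app T (scale_pair l u + scale_pair (m / D) (J u)) = scale_pair l (mat2_app T u) + scale_pair m (F (mat2_app T u))"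
    using D by (simp add: mat2_app_add mat2_app_scale F_T scale_pair_scale_pair)
  also have "\<dots> = mat2_app T (scale_pair (1 / D ^ 3) (J (J u)))"
    unfolding mat2_app_scale t[symmetric] frame[folded u_def] ..
  finally have rel: "scale_pair l u + scale_pair (m / D) (J u) = scale_pair (1 / D ^ 3) (J (J u))"
    by (rule mat2_app_inj[OF det])
  obtain h where "l \<noteq> 0" "m / D \<noteq> 0"
    and R: "\<And>z. mat2_conj R J z = scale_pair h (qmap ((- 1, 2, 0), (- 1, 0, - l\<^sup>2 / (m / D * D) ^ 3)) z)"
    using orbit_frame_conj_psi[OF H[folded D_def] D A rel[unfolded u_def J_def], folded u_def J_def, folded R_def]
    by blast
  have conj_T: "mat2_conj T F = J"
    using nf by (simp add: J_def D_def fun_eq_iff)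
  show ?thesis
  proof (intro conjI exI allI)
    show "l \<noteq> 0" "m \<noteq> 0"
      using \<open>l \<noteq> 0\<close> \<open>m / D \<noteq> 0\<close> by auto
    show "mat2_conj (mat2_cols (scale_pair l (mat2_app T (u1, u2))) (scale_pair m (F (mat2_app T (u1, u2))))) F z
      = scale_pair h (qmap ((- 1, 2, 0), (- 1, 0, - l\<^sup>2 / m ^ 3)) z)" for z
      using R[of z] D by (simp add: \<sigma>[unfolded u_def] mat2_conj_mul conj_T)
  qed
qed

lemma rational_frame_conj_psi:
  fixes T :: "'a::field_char_0 mat2"
  assumes det: "mat2_det T \<noteq> 0" and A: "A \<noteq> 0"
    and nf: "\<And>z. mat2_conj T (qmap (map_coeffs f)) z = qmap ((mat2_det T, 0, 0), (0, 0, A)) z"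
  shows "\<exists>\<sigma> v h. mat2_det \<sigma> \<noteq> 0 \<and> v \<noteq> 0 \<and>
    (\<forall>z :: 'a \<times> 'a. mat2_conj (mat2_of_rat \<sigma>) (qmap (map_coeffs f)) z = scale_pair h (qmap (map_coeffs (psi v)) z))"
proof -
  let ?\<phi> = "qmap (map_coeffs f) :: 'a \<times> 'a \<Rightarrow> 'a \<times> 'a"
  let ?c = "map_prod (of_rat :: rat \<Rightarrow> 'a) of_rat"
  obtain k u1 u2 where Tu: "mat2_app T (u1, u2) = (of_rat k, 1)"
    and H: "u1 * u2 * (A\<^sup>2 * u1 ^ 6 - (mat2_det T)\<^sup>2 * u2 ^ 6) \<noteq> 0"
    using exists_rat_point_avoiding_zeros[OF det, of "A\<^sup>2" "(mat2_det T)\<^sup>2"] A det by auto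
  define p where "p = mat2_app T (u1, u2)"
  define x s t where "x = (k, 1 :: rat)" and "s = qmap (map_coeffs f) x" and "t = qmap (map_coeffs f) s"
  have x: "?c x = p"
    using Tu by (simp add: x_def p_def)
  have s: "?c s = ?\<phi> p" and t: "?c t = ?\<phi> (?c s)"
    by (simp_all add: s_def t_def qmap_map_coeffs_of_rat[symmetric] x)
  have "of_rat (cross x s) = cross p (?\<phi> p)"
    unfolding cross_of_rat[symmetric] s x ..
  then have "cross x s \<noteq> 0"
    using orbit_point_not_fixed[OF det nf H, folded p_def] by (metis of_rat_0)
  then obtain l m where "t = scale_pair l x + scale_pair m s"
    using cramer_pair by blast
  then have "?c t = scale_pair (of_rat l) (?c x) + scale_pair (of_rat m) (?c s)"
    by (simp add: map_prod_of_rat_add map_prod_of_rat_scale)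
  then have "?\<phi> (?\<phi> p) = scale_pair (of_rat l) p + scale_pair (of_rat m) (?\<phi> p)"
    unfolding t s x .
  then obtain h where "of_rat l \<noteq> (0::'a)" "of_rat m \<noteq> (0::'a)"
    and conj: "\<And>z. mat2_conj (mat2_cols (scale_pair (of_rat l) p) (scale_pair (of_rat m) (?\<phi> p))) ?\<phi> z
      = scale_pair h (qmap ((- 1, 2, 0), (- 1, 0, - (of_rat l)\<^sup>2 / (of_rat m) ^ 3)) z)"
    using conj_orbit_frame_eq_psi[OF det A nf H, folded p_def] by blast
  have \<sigma>: "mat2_of_rat (mat2_cols (scale_pair l x) (scale_pair m s))
      = mat2_cols (scale_pair (of_rat l) p) (scale_pair (of_rat m) (?\<phi> p))"
    by (simp add: mat2_of_rat_cols map_prod_of_rat_scale x s)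
  have "l \<noteq> 0" "m \<noteq> 0"
    using \<open>of_rat l \<noteq> 0\<close> \<open>of_rat m \<noteq> 0\<close> by auto
  show ?thesis
  proof (intro exI conjI allI)
    show "mat2_conj (mat2_of_rat (mat2_cols (scale_pair l x) (scale_pair m s))) ?\<phi> z
      = scale_pair h (qmap (map_coeffs (psi (- l\<^sup>2 / m ^ 3))) z)" for z
      by (simp add: \<sigma> conj qmap_map_coeffs_psi of_rat_divide of_rat_minus of_rat_power)
    show "mat2_det (mat2_cols (scale_pair l x) (scale_pair m s)) \<noteq> 0"
      using \<open>cross x s \<noteq> 0\<close> \<open>l \<noteq> 0\<close> \<open>m \<noteq> 0\<close> by (simp add: mat2_det_cols cross_scale_left cross_scale_right)
    show "- l\<^sup>2 / m ^ 3 \<noteq> 0"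
      using \<open>l \<noteq> 0\<close> \<open>m \<noteq> 0\<close> by simp
  qed
qed

lemma cross_eq_0_of_mat2_conj_eq:
  fixes s :: "'a::field mat2"
  assumes "mat2_det s \<noteq> 0" "mat2_conj s F z = scale_pair h (G z)"
  shows "cross (mat2_app s (G z)) (F (mat2_app s z)) = 0"
proof -
  have "scale_pair (mat2_det s) (F (mat2_app s z)) = scale_pair h (mat2_app s (G z))"
    using mat2_app_conj[of s F z] assms(2) by (simp add: mat2_app_scale)
  then have "mat2_det s * cross (mat2_app s (G z)) (F (mat2_app s z)) = 0"
    by (metis cross_scale_right cross_self mult_zero_right)
  then show ?thesis
    using assms(1) by simp
qed

lemma mat2_conj_eq_psi_imp_ne_4:
  fixes s :: "'a::field_char_0 mat2"
  assumes "mat2_det s \<noteq> 0" and nondeg: "\<And>w. F w = (0, 0) \<Longrightarrow> w = (0, 0)"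
    and conj: "\<And>z. mat2_conj s F z = scale_pair h (qmap (map_coeffs (psi v)) z)"
  shows "v \<noteq> 4"
proof
  assume "v = 4"
  have zero: "mat2_app s (0, 0) = (0, 0)"
    by (cases s) simp
  have "mat2_conj s F (1, 2) = (0, 0)"
    using conj \<open>v = 4\<close> by (simp add: qmap_map_coeffs_psi)
  then have "scale_pair (mat2_det s) (F (mat2_app s (1, 2))) = (0, 0)"
    using mat2_app_conj[of s F "(1, 2)"] zero by metis
  then have "scale_pair (mat2_det s) (F (mat2_app s (1, 2))) = scale_pair (mat2_det s) (0, 0)"
    by simp
  then have "F (mat2_app s (1, 2)) = (0, 0)"
    by (rule scale_pair_cancel[OF assms(1)])
  then have "mat2_app s (1, 2) = mat2_app s (0, 0)"
    using nondeg zero by simp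
  then show False
    using mat2_app_inj[OF assms(1)] by fastforce
qed

lemma lin_conj_over_Q_of_mat2_conj_eq:
  assumes "mat2_det \<sigma> \<noteq> 0"
    and "\<And>z :: complex \<times> complex.
      mat2_conj (mat2_of_rat \<sigma>) (qmap (map_coeffs f)) z = scale_pair h (qmap (map_coeffs g) z)"
  shows "lin_conj_over_Q 2 f g"
proof -
  obtain a b c d where \<sigma>: "\<sigma> = (a, b, c, d)" by (metis prod.exhaust)
  have "mat2_det (mat2_of_rat \<sigma> :: complex mat2) \<noteq> 0"
    using assms(1) by (simp add: mat2_det_of_rat)
  then have "cross (mat2_app (mat2_of_rat \<sigma>) (qmap (map_coeffs g) z))
      (qmap (map_coeffs f) (mat2_app (mat2_of_rat \<sigma>) z)) = 0"
    for z :: "complex \<times> complex"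
    by (rule cross_eq_0_of_mat2_conj_eq[where G = "qmap (map_coeffs g)"]) (use assms(2) in auto)
  then have "proj_eq (mob (of_rat a, of_rat b, of_rat c, of_rat d) (map_P1 2 g z))
      (map_P1 2 f (mob (of_rat a, of_rat b, of_rat c, of_rat d) z))" for z
    by (simp add: proj_eq_iff_cross mob_eq_mat2_app map_P1_2_eq_qmap \<sigma> mat2_of_rat_def)
  moreover have "a * d - b * c \<noteq> 0"
    using assms(1) by (simp add: \<sigma>)
  ultimately show ?thesis
    unfolding lin_conj_over_Q_def by blast
qed

theorem lemma2p6:
  fixes f :: "rat poly \<times> rat poly"
  assumes "rat_map_degree f 2"
    and "\<exists>z. is_critical_point 2 f z \<and> two_periodic 2 f z"
    and "Aut_nontrivial 2 f"
  shows "\<exists>v :: rat. v \<noteq> 0 \<and> v \<noteq> 4 \<and> lin_conj_over_Q 2 f (psi v)"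
proof -
  obtain c s where "is_critical_point 2 f c" "two_periodic 2 f c" "in_Aut 2 f s" "\<not> is_identity_mob s"
    using assms(2,3) by (auto simp: Aut_nontrivial_def)
  then obtain T :: "complex mat2" and A where "mat2_det T \<noteq> 0" "A \<noteq> 0"
    "\<And>z. mat2_conj T (qmap (map_coeffs f)) z = qmap ((mat2_det T, 0, 0), (0, 0, A)) z"
    using critical_two_cycle_normal_form[OF assms(1)] by blast
  then obtain \<sigma> v h where \<sigma>: "mat2_det \<sigma> \<noteq> 0" and "v \<noteq> 0"
    and conj: "\<And>z :: complex \<times> complex.
      mat2_conj (mat2_of_rat \<sigma>) (qmap (map_coeffs f)) z = scale_pair h (qmap (map_coeffs (psi v)) z)"
    using rational_frame_conj_psi by blast
  moreover have "v \<noteq> 4"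
    using mat2_conj_eq_psi_imp_ne_4[OF _ qmap_map_coeffs_eq_0_imp[OF assms(1)] conj] \<sigma>
    by (simp add: mat2_det_of_rat)
  moreover have "lin_conj_over_Q 2 f (psi v)"
    using lin_conj_over_Q_of_mat2_conj_eq[OF \<sigma> conj] .
  ultimately show ?thesis
    by blast
qed

end
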